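(* Let $\lambda>0$ be a real number and let $\mathbf{H}$ be the $4\times 8$ binary matrix $$\mathbf{H}=\begin{bmatrix}1&1&1&1&0&0&0&0\\0&0&1&1&1&1&0&0\\0&0&0&0&1&1&1&1\\0&1&0&1&0&1&0&1\end{bmatrix}.$$ For any $\mathbf{k}_1\in\{0,1\}^4$, let $\mathbf{v}_1:=\mathrm{Encode}_{E'_8}(\mathbf{k}_1)=\lambda\cdot(\mathbf{k}_1\mathbf{H}\bmod 2)\in[0,\lambda]^8$. For any $\mathbf{v}_2\in\mathbb{R}^8$, let $\mathbf{k}_2:=\mathrm{Decode}_{E'_8}(\mathbf{v}_2)$ (the decoding algorithm described in the context). If $\|\mathbf{v}_2-\mathbf{v}_1\|_{2\lambda,2}<\lambda$, then $\mathbf{k}_1=\mathbf{k}_2$.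
   Context: Norms: for a positive real $Q$ and $w\in\mathbb{R}$, $w\bmod^{\pm}Q$ denotes the representative of $w$ modulo $Q$ in $[-Q/2,Q/2)$, $\|w\|_{Q,\infty}:=|w\bmod^{\pm}Q|$ and $\|w\|_{Q,2}:=\|w\|_{Q,\infty}$; for a vector $\mathbf{w}=(w_0,\dots,w_{m-1})$, $\|\mathbf{w}\|_{Q,2}:=\sqrt{\sum_i\|w_i\|_{Q,\infty}^2}$. The scalable $E_8$ lattice is $E'_8=\lambda\cdot[C\cup(C+\mathbf{c})]$ where $C=\{(x_1,x_1,x_2,x_2,x_3,x_3,x_4,x_4)\in\{0,1\}^8:\sum x_i\equiv 0\bmod 2\}$ and $\mathbf{c}=(0,1,0,1,0,1,0,1)$; equivalently $E'_8=\{\lambda(\mathbf{k}\mathbf{H}\bmod 2):\mathbf{k}\in\{0,1\}^4\}$. Subroutine $\mathrm{Decode}_{C'}(\mathbf{x})$ for $\mathbf{x}=(x_0,\dots,x_7)\in\mathbb{R}^8$: set $mind:=+\infty$, $mini:=0$, $\mathsf{TotalCost}:=0$. For $i=0,\dots,3$: let $c_0:=\|x_{2i}\|_{2\lambda,2}^2+\|x_{2i+1}\|_{2\lambda,2}^2$ and $c_1:=\|x_{2i}-\lambda\|_{2\lambda,2}^2+\|x_{2i+1}-\lambda\|_{2\lambda,2}^2$; let $k_i:=\arg\min\{c_0,c_1\}\in\{0,1\}$; add $c_{k_i}$ to $\mathsf{TotalCost}$; if $c_{1-k_i}-c_{k_i}<mind$, set $mind:=c_{1-k_i}-c_{k_i}$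 and $mini:=i$. After the loop, if $k_0+k_1+k_2+k_3$ is odd, replace $k_{mini}$ by $1-k_{mini}$ and add $mind$ to $\mathsf{TotalCost}$. Output $((k_0,k_1,k_2,k_3),\mathsf{TotalCost})$. Algorithm $\mathrm{Decode}_{E'_8}(\mathbf{x})$: compute $(\mathbf{k}_0',T_0):=\mathrm{Decode}_{C'}(\mathbf{x})$ and $(\mathbf{k}_1',T_1):=\mathrm{Decode}_{C'}(\mathbf{x}-\lambda\mathbf{c})$; let $b:=\arg\min\{T_0,T_1\}$; write $\mathbf{k}'_b=(k_0,k_1,k_2,k_3)$ and output $(k_0,\,k_1\oplus k_0,\,k_3,\,b)\in\{0,1\}^4$. *)

theory Defs
  imports Complex_Main "HOL-Library.Extended_Real"
begin

definition modpm :: "real \<Rightarrow> real \<Rightarrow> real" where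
  "modpm Q w = w - Q * of_int \<lfloor>w / Q + 1/2\<rfloor>"

definition normQinf :: "real \<Rightarrow> real \<Rightarrow> real" where
  "normQinf Q w = \<bar>modpm Q w\<bar>"

definition normQ2s :: "real \<Rightarrow> real \<Rightarrow> real" where
  "normQ2s Q w = normQinf Q w"

definition normQ2 :: "real \<Rightarrow> real list \<Rightarrow> real" where
  "normQ2 Q ws = sqrt (\<Sum>i<length ws. (normQinf Q (ws ! i))^2)"

definition Hmat :: "nat list list" where
  "Hmat = [[1,1,1,1,0,0,0,0],
           [0,0,1,1,1,1,0,0],
           [0,0,0,0,1,1,1,1],
           [0,1,0,1,0,1,0,1]]"

definition encodeE8 :: "real \<Rightarrow> nat list \<Rightarrow> real list" where
  "encodeE8 lam k = map (\<lambda>j. lam * real ((\<Sum>i<4. k ! i * Hmat ! i ! j) mod 2)) [0..<8]"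

definition cvec :: "real list" where
  "cvec = [0,1,0,1,0,1,0,1]"

text \<open>One loop iteration of Decode_C'; state = (k list so far, mind, mini, TotalCost).\<close>
definition decC_step :: "real \<Rightarrow> real list \<Rightarrow> nat list \<times> ereal \<times> nat \<times> real \<Rightarrow> nat
    \<Rightarrow> nat list \<times> ereal \<times> nat \<times> real" where
  "decC_step lam x st i =
    (case st of (ks, mind, mini, tot) \<Rightarrow>
      let c0 = (normQ2s (2*lam) (x ! (2*i)))^2 + (normQ2s (2*lam) (x ! (2*i+1)))^2;
          c1 = (normQ2s (2*lam) (x ! (2*i) - lam))^2 + (normQ2s (2*lam) (x ! (2*i+1) - lam))^2;
          k = (if c1 < c0 then (1::nat) else 0);
          ck = (if k = 0 then c0 else c1);
          co = (if k = 0 then c1 else c0);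
          upd = (ereal (co - ck) < mind)
      in (ks @ [k], (if upd then ereal (co - ck) else mind), (if upd then i else mini), tot + ck))"

definition decodeC :: "real \<Rightarrow> real list \<Rightarrow> nat list \<times> real" where
  "decodeC lam x =
    (case foldl (decC_step lam x) ([], PInfty, 0, 0) [0..<4] of (ks, mind, mini, tot) \<Rightarrow>
      if odd (sum_list ks)
      then (ks[mini := 1 - ks ! mini], tot + real_of_ereal mind)
      else (ks, tot))"

definition decodeE8 :: "real \<Rightarrow> real list \<Rightarrow> nat list" where
  "decodeE8 lam x =
    (let (k0', T0) = decodeC lam x;
         (k1', T1) = decodeC lam (map2 (\<lambda>a c. a - lam * c) x cvec);
         b = (if T1 < T0 then (1::nat) else 0);
         kb = (if b = 0 then k0' else k1')
     in [kb ! 0, (kb ! 1 + kb ! 0) mod 2, kb ! 3, b])"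

end

theory Submission
  imports Defs
begin

(* The points of E'_8 are lam * w, where w runs through the words of C \<union> (C + c) with
   entries taken mod 2; these form the extended Hamming code, of minimum distance 4.
   On the torus R/2lam Z, replacing a coordinate lam*b by a grid point of the other parity
   turns its distance u into lam - u, and (lam - u)^2 \<ge> lam^2/2 - u^2.  Hence, if v lies at
   squared distance D < lam^2 from the encoded point, every other point of E'_8 is at
   squared distance at least 4 * lam^2/2 - D > D.  Decode_C' is Wagner's decoder of the
   even-weight code: it returns an even word of least cost, i.e. the point of the coset
   C + b c nearest to v.  So the coset of the encoded point wins the comparison, its
   decoder returns the encoded word, and the output map of Decode_E8 inverts the
   encoding. *)

section \<open>Distances on the torus R/2lam Z\<close>

lemma modpm_bounds:
  assumes "Q > 0"
  shows "- Q/2 \<le> modpm Q w" "modpm Q w < Q/2"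
proof -
  define n where "n = \<lfloor>w / Q + 1/2\<rfloor>"
  have "of_int n \<le> w/Q + 1/2" "w/Q + 1/2 < of_int n + 1" unfolding n_def by linarith+
  then have "Q * of_int n \<le> w + Q/2" "w + Q/2 < Q * of_int n + Q"
    using assms by (auto simp: field_simps)
  then show "- Q/2 \<le> modpm Q w" "modpm Q w < Q/2" unfolding modpm_def n_def[symmetric] by auto
qed

lemma modpm_eqI:
  assumes "Q > 0" "- Q/2 \<le> r" "r < Q/2" "w = r + Q * of_int n"
  shows "modpm Q w = r"
proof -
  have "w / Q + 1/2 = (r/Q + 1/2) + of_int n" using assms by (auto simp: field_simps)
  moreover have "\<lfloor>r/Q + 1/2\<rfloor> = 0" using assms(1-3) by (auto simp: floor_eq_iff field_simps)
  ultimately have "\<lfloor>w / Q + 1/2\<rfloor> = n" by (simp only: floor_add_int) simp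
  then show ?thesis using assms(4) unfolding modpm_def by simp
qed

lemma modpm_decomp: "w = modpm Q w + Q * of_int \<lfloor>w / Q + 1/2\<rfloor>"
  unfolding modpm_def by simp

lemma normQinf_add_period: "Q > 0 \<Longrightarrow> normQinf Q (y + Q * of_int m) = normQinf Q y"
  unfolding normQinf_def
  by (subst modpm_eqI[where r = "modpm Q y" and n = "\<lfloor>y / Q + 1/2\<rfloor> + m"])
     (use modpm_bounds[of Q y] modpm_decomp[of y Q] in \<open>auto simp: algebra_simps\<close>)

lemma normQinf_diff_half_period:
  assumes "lam > 0"
  shows "normQinf (2*lam) (y - lam) = lam - normQinf (2*lam) y"
proof -
  let ?r = "modpm (2*lam) y" and ?n = "\<lfloor>y / (2*lam) + 1/2\<rfloor>"
  have r: "- lam \<le> ?r" "?r < lam" using modpm_bounds[of "2*lam" y] assms by auto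
  have y: "y = ?r + 2*lam * of_int ?n" by (rule modpm_decomp)
  show ?thesis
  proof (cases "?r \<ge> 0")
    case True
    have "modpm (2*lam) (y - lam) = ?r - lam"
      by (rule modpm_eqI[where n = ?n]) (use r True assms y in \<open>auto simp: algebra_simps\<close>)
    then show ?thesis unfolding normQinf_def using True r by simp
  next
    case False
    have "modpm (2*lam) (y - lam) = ?r + lam"
      by (rule modpm_eqI[where n = "?n - 1"]) (use r False assms y in \<open>auto simp: algebra_simps\<close>)
    then show ?thesis unfolding normQinf_def using False r by simp
  qed
qed

lemma normQinf_diff_int_mult:
  assumes "lam > 0"
  shows "normQinf (2*lam) (y - lam * of_int t) =
    (if even t then normQinf (2*lam) y else lam - normQinf (2*lam) y)"
proof (cases "even t")
  case True
  then obtain m where "t = 2*m" by auto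
  then have shift: "y - lam * of_int t = y + 2*lam * of_int (-m)" by (simp add: algebra_simps)
  show ?thesis unfolding shift using normQinf_add_period[of "2*lam" y "-m"] assms True by simp
next
  case False
  then obtain m where "t = 2*m + 1" by (metis oddE)
  then have shift: "y - lam * of_int t = (y + 2*lam * of_int (-m)) - lam" by (simp add: algebra_simps)
  show ?thesis unfolding shift normQinf_diff_half_period[OF assms]
    using normQinf_add_period[of "2*lam" y "-m"] assms False by simp
qed

lemma normQinf_change_grid_point:
  assumes "lam > 0"
  shows "normQinf (2*lam) (y - lam * real b) =
    (if even (a + b) then normQinf (2*lam) (y - lam * real a) else lam - normQinf (2*lam) (y - lam * real a))"
proof -
  have shift: "y - lam * real b = (y - lam * real a) - lam * of_int (int b - int a)"
    by (simp add: algebra_simps)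
  have parity: "even (int b - int a) \<longleftrightarrow> even (a + b)"
    by (metis even_add even_diff even_of_nat)
  show ?thesis unfolding shift normQinf_diff_int_mult[OF assms] parity ..
qed

definition sq_torus_dist :: "real \<Rightarrow> real list \<Rightarrow> nat list \<Rightarrow> real" where
  "sq_torus_dist lam v w = (\<Sum>j<length v. (normQinf (2*lam) (v ! j - lam * real (w ! j)))\<^sup>2)"

lemma normQ2_diff_scaled_word:
  "length w = length v \<Longrightarrow>
    normQ2 (2*lam) (map2 (-) v (map (\<lambda>b. lam * real b) w)) = sqrt (sq_torus_dist lam v w)"
  unfolding normQ2_def sq_torus_dist_def by simp

lemma sq_torus_dist_change_word:
  assumes "lam > 0"
  shows "sq_torus_dist lam v w' = (\<Sum>j<length v.
    let u = normQinf (2*lam) (v ! j - lam * real (w ! j)) in if even (w ! j + w' ! j) then u\<^sup>2 else (lam - u)\<^sup>2)"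
  unfolding sq_torus_dist_def Let_def
proof (intro sum.cong refl)
  fix j
  show "(normQinf (2*lam) (v ! j - lam * real (w' ! j)))\<^sup>2 =
    (if even (w ! j + w' ! j) then (normQinf (2*lam) (v ! j - lam * real (w ! j)))\<^sup>2
     else (lam - normQinf (2*lam) (v ! j - lam * real (w ! j)))\<^sup>2)"
    using normQinf_change_grid_point[OF assms, of "v ! j" "w' ! j" "w ! j"] by simp
qed

lemma sq_torus_dist_same_parity:
  assumes "lam > 0" "\<forall>j<length v. even (w ! j + w' ! j)"
  shows "sq_torus_dist lam v w' = sq_torus_dist lam v w"
  unfolding sq_torus_dist_change_word[OF assms(1), of v w' w] using assms(2)
  by (auto simp: sq_torus_dist_def Let_def intro: sum.cong)

lemma sum_sq_lt_sum_sq_reflected: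
  fixes u :: "'a \<Rightarrow> real"
  assumes "finite F" "4 \<le> card F" "(\<Sum>j\<in>F. (u j)\<^sup>2) < lam\<^sup>2"
  shows "(\<Sum>j\<in>F. (u j)\<^sup>2) < (\<Sum>j\<in>F. (lam - u j)\<^sup>2)"
proof -
  have "(\<Sum>j\<in>F. lam\<^sup>2 / 2 - (u j)\<^sup>2) \<le> (\<Sum>j\<in>F. (lam - u j)\<^sup>2)"
  proof (intro sum_mono)
    fix j
    have "0 \<le> (lam - 2 * u j)\<^sup>2" by simp
    then show "lam\<^sup>2 / 2 - (u j)\<^sup>2 \<le> (lam - u j)\<^sup>2" by (simp add: power2_eq_square algebra_simps)
  qed
  moreover have "(\<Sum>j\<in>F. lam\<^sup>2 / 2 - (u j)\<^sup>2) = real (card F) * lam\<^sup>2 / 2 - (\<Sum>j\<in>F. (u j)\<^sup>2)"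
    by (simp add: sum_subtractf)
  moreover have "4 * lam\<^sup>2 / 2 \<le> real (card F) * lam\<^sup>2 / 2"
    using assms(2) by (intro divide_right_mono mult_right_mono) auto
  ultimately show ?thesis using assms(3) by linarith
qed

lemma sq_torus_dist_far_word:
  assumes "lam > 0" "sq_torus_dist lam v w < lam\<^sup>2"
    and "4 \<le> card {j. j < length v \<and> odd (w ! j + w' ! j)}"
  shows "sq_torus_dist lam v w < sq_torus_dist lam v w'"
proof -
  define u where "u j = normQinf (2*lam) (v ! j - lam * real (w ! j))" for j
  define F where "F = {j. j < length v \<and> odd (w ! j + w' ! j)}"
  define E where "E = {j. j < length v \<and> even (w ! j + w' ! j)}"
  have split: "(\<Sum>j<length v. g j) = (\<Sum>j\<in>E. g j) + (\<Sum>j\<in>F. g j)" for g :: "nat \<Rightarrow> real"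
    by (subst sum.union_disjoint[symmetric]) (auto simp: E_def F_def intro: sum.cong)
  have dist_w: "sq_torus_dist lam v w = (\<Sum>j\<in>E. (u j)\<^sup>2) + (\<Sum>j\<in>F. (u j)\<^sup>2)"
    unfolding sq_torus_dist_def u_def[symmetric] split ..
  have dist_w': "sq_torus_dist lam v w' = (\<Sum>j\<in>E. (u j)\<^sup>2) + (\<Sum>j\<in>F. (lam - u j)\<^sup>2)"
    unfolding sq_torus_dist_change_word[OF assms(1), of v w' w] u_def[symmetric] split Let_def
    by (auto simp: E_def F_def intro!: arg_cong2[where f = "(+)"] sum.cong)
  have "(\<Sum>j\<in>F. (u j)\<^sup>2) < lam\<^sup>2"
    using assms(2) sum_nonneg[of E "\<lambda>j. (u j)\<^sup>2"] unfolding dist_w by simp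
  then have "(\<Sum>j\<in>F. (u j)\<^sup>2) < (\<Sum>j\<in>F. (lam - u j)\<^sup>2)"
    using assms(3) by (intro sum_sq_lt_sum_sq_reflected) (auto simp: F_def)
  then show ?thesis unfolding dist_w dist_w' by simp
qed

section \<open>Wagner decoding of the even-weight code\<close>

(* For a cost c i b of bit b at position i: the choice k_i, the cost c_{k_i} and the
   gap c_{1-k_i} - c_{k_i} of Decode_C'. *)
definition bit_choice :: "(nat \<Rightarrow> nat \<Rightarrow> real) \<Rightarrow> nat \<Rightarrow> nat" where
  "bit_choice c i = (if c i 1 < c i 0 then 1 else 0)"

definition bit_min :: "(nat \<Rightarrow> nat \<Rightarrow> real) \<Rightarrow> nat \<Rightarrow> real" where
  "bit_min c i = min (c i 0) (c i 1)"

definition bit_gap :: "(nat \<Rightarrow> nat \<Rightarrow> real) \<Rightarrow> nat \<Rightarrow> real" where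
  "bit_gap c i = \<bar>c i 1 - c i 0\<bar>"

definition word_cost :: "(nat \<Rightarrow> nat \<Rightarrow> real) \<Rightarrow> nat list \<Rightarrow> real" where
  "word_cost c a = (\<Sum>i<length a. c i (a ! i))"

definition even_weight_words :: "nat \<Rightarrow> nat list set" where
  "even_weight_words n = {a. length a = n \<and> set a \<subseteq> {0, 1} \<and> even (sum_list a)}"

definition wagner_word :: "(nat \<Rightarrow> nat \<Rightarrow> real) \<Rightarrow> nat \<Rightarrow> nat \<Rightarrow> nat list" where
  "wagner_word c m n =
    (let k = map (bit_choice c) [0..<n] in if odd (sum_list k) then k[m := 1 - k ! m] else k)"

lemma bit_choice_bit: "bit_choice c i \<in> {0, 1}"
  unfolding bit_choice_def by simp

lemma bit_gap_nonneg: "0 \<le> bit_gap c i"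
  unfolding bit_gap_def by simp

lemma cost_bit_eq:
  "b \<in> {0, 1} \<Longrightarrow> c i b = bit_min c i + (if b = bit_choice c i then 0 else bit_gap c i)"
  unfolding bit_min_def bit_gap_def bit_choice_def by auto

lemma word_cost_eq:
  assumes "set a \<subseteq> {0, 1}"
  shows "word_cost c a = (\<Sum>i<length a. bit_min c i)
    + (\<Sum>i | i < length a \<and> a ! i \<noteq> bit_choice c i. bit_gap c i)"
proof -
  have "word_cost c a
      = (\<Sum>i<length a. bit_min c i + (if a ! i \<noteq> bit_choice c i then bit_gap c i else 0))"
    unfolding word_cost_def
  proof (intro sum.cong refl)
    fix i assume "i \<in> {..<length a}"
    then have "a ! i \<in> {0, 1}" using assms nth_mem by blast
    then show "c i (a ! i) = bit_min c i + (if a ! i \<noteq> bit_choice c i then bit_gap c i else 0)"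
      using cost_bit_eq[of "a ! i" c i] by simp
  qed
  also have "\<dots> = (\<Sum>i<length a. bit_min c i)
      + (\<Sum>i | i \<in> {..<length a} \<and> a ! i \<noteq> bit_choice c i. bit_gap c i)"
    by (simp add: sum.distrib sum.inter_filter[of "{..<length a}", simplified])
  finally show ?thesis by simp
qed

lemma odd_sum_list_flip:
  fixes k :: "nat list"
  assumes "odd (sum_list k)" "m < length k" "k ! m \<le> 1"
  shows "even (sum_list (k[m := 1 - k ! m]))"
proof -
  have "k ! m \<le> sum_list k" by (rule elem_le_sum_list[OF assms(2)])
  then show ?thesis using assms by (auto simp: sum_list_update le_Suc_eq)
qed

lemma wagner_word_mem:
  assumes "m < n"
  shows "wagner_word c m n \<in> even_weight_words n"
proof -
  let ?k = "map (bit_choice c) [0..<n]"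
  have bits: "set ?k \<subseteq> {0, 1}" "?k ! m \<in> {0, 1}"
    using assms by (auto simp: bit_choice_def)
  then have "set (?k[m := 1 - ?k ! m]) \<subseteq> {0, 1}"
    by (intro set_update_subsetI) auto
  moreover have "odd (sum_list ?k) \<Longrightarrow> even (sum_list (?k[m := 1 - ?k ! m]))"
    using odd_sum_list_flip[of ?k m] assms bits(2) by auto
  ultimately show ?thesis
    using bits(1) unfolding wagner_word_def even_weight_words_def Let_def by auto
qed

lemma wagner_word_cost:
  assumes "m < n"
  shows "word_cost c (wagner_word c m n) = (\<Sum>i<n. bit_min c i)
    + (if odd (sum_list (map (bit_choice c) [0..<n])) then bit_gap c m else 0)"
proof -
  let ?w = "wagner_word c m n"
  have w: "length ?w = n" "set ?w \<subseteq> {0, 1}"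
    using wagner_word_mem[OF assms] unfolding even_weight_words_def by auto
  have "1 - bit_choice c m \<noteq> bit_choice c m"
    using bit_choice_bit[of c m] by auto
  then have "{i. i < n \<and> ?w ! i \<noteq> bit_choice c i}
      = (if odd (sum_list (map (bit_choice c) [0..<n])) then {m} else {})"
    using assms by (auto simp: wagner_word_def Let_def nth_list_update)
  then show ?thesis
    unfolding word_cost_eq[OF w(2)] w(1) by simp
qed

(* If the bitwise optimum has odd weight, every even word disagrees with it somewhere,
   and a disagreement at i costs at least the least gap. *)
lemma wagner_word_optimal:
  assumes "m < n" "\<forall>i<n. bit_gap c m \<le> bit_gap c i" "a \<in> even_weight_words n"
  shows "word_cost c (wagner_word c m n) \<le> word_cost c a"
proof -
  let ?k = "map (bit_choice c) [0..<n]"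
  let ?D = "{i. i < n \<and> a ! i \<noteq> bit_choice c i}"
  have a: "length a = n" "set a \<subseteq> {0, 1}" "even (sum_list a)"
    using assms(3) unfolding even_weight_words_def by auto
  have cost_a: "word_cost c a = (\<Sum>i<n. bit_min c i) + (\<Sum>i\<in>?D. bit_gap c i)"
    using word_cost_eq[OF a(2)] a(1) by simp
  have "bit_gap c m \<le> (\<Sum>i\<in>?D. bit_gap c i)" if "odd (sum_list ?k)"
  proof -
    have "a \<noteq> ?k" using that a(3) by auto
    then obtain j where "j < n" "a ! j \<noteq> ?k ! j"
      using a(1) by (auto simp: list_eq_iff_nth_eq)
    then have "j \<in> ?D" by simp
    then have "bit_gap c j \<le> (\<Sum>i\<in>?D. bit_gap c i)"
      by (intro member_le_sum bit_gap_nonneg) auto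
    then show ?thesis using assms(2) \<open>j < n\<close> by force
  qed
  moreover have "0 \<le> (\<Sum>i\<in>?D. bit_gap c i)"
    by (intro sum_nonneg bit_gap_nonneg)
  ultimately show ?thesis
    unfolding cost_a wagner_word_cost[OF assms(1)] by auto
qed

section \<open>The decoder Decode_C'\<close>

definition pair_cost :: "real \<Rightarrow> real list \<Rightarrow> nat \<Rightarrow> nat \<Rightarrow> real" where
  "pair_cost lam x i b =
    (normQ2s (2*lam) (x ! (2*i) - lam * real b))\<^sup>2 + (normQ2s (2*lam) (x ! (2*i+1) - lam * real b))\<^sup>2"

lemma decC_step_eq:
  "decC_step lam x (ks, mind, mini, tot) i =
    (ks @ [bit_choice (pair_cost lam x) i],
     if ereal (bit_gap (pair_cost lam x) i) < mind then ereal (bit_gap (pair_cost lam x) i) else mind,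
     if ereal (bit_gap (pair_cost lam x) i) < mind then i else mini,
     tot + bit_min (pair_cost lam x) i)"
  unfolding decC_step_def bit_choice_def bit_gap_def bit_min_def pair_cost_def
  by (auto simp: Let_def)

(* Stated for a nonempty loop, after which mind is finite. *)
lemma foldl_decC_step:
  fixes lam :: real and x :: "real list"
  defines "c \<equiv> pair_cost lam x"
  shows "\<exists>m\<le>n. (\<forall>i\<le>n. bit_gap c m \<le> bit_gap c i) \<and>
    foldl (decC_step lam x) ([], PInfty, 0, 0) [0..<Suc n] =
      (map (bit_choice c) [0..<Suc n], ereal (bit_gap c m), m, \<Sum>i<Suc n. bit_min c i)"
proof (induction n)
  case 0
  show ?case by (simp add: decC_step_eq c_def)
next
  case (Suc n)
  then obtain m where m: "m \<le> n" "\<forall>i\<le>n. bit_gap c m \<le> bit_gap c i"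
    and fold: "foldl (decC_step lam x) ([], PInfty, 0, 0) [0..<Suc n] =
      (map (bit_choice c) [0..<Suc n], ereal (bit_gap c m), m, \<Sum>i<Suc n. bit_min c i)"
    by blast
  let ?m' = "if bit_gap c (Suc n) < bit_gap c m then Suc n else m"
  have "?m' \<le> Suc n" "\<forall>i\<le>Suc n. bit_gap c ?m' \<le> bit_gap c i"
    using m by (auto simp: le_Suc_eq)
  moreover have "foldl (decC_step lam x) ([], PInfty, 0, 0) [0..<Suc (Suc n)] =
      (map (bit_choice c) [0..<Suc (Suc n)], ereal (bit_gap c ?m'), ?m', \<Sum>i<Suc (Suc n). bit_min c i)"
    using fold by (simp add: decC_step_eq c_def[symmetric])
  ultimately show ?case by blast
qed

lemma decodeC_optimal:
  assumes "decodeC lam x = (K, T)"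
  shows "K \<in> even_weight_words 4" "T = word_cost (pair_cost lam x) K"
    "\<forall>a\<in>even_weight_words 4. T \<le> word_cost (pair_cost lam x) a"
proof -
  let ?c = "pair_cost lam x"
  obtain m where m: "m < 4" "\<forall>i<4. bit_gap ?c m \<le> bit_gap ?c i"
    and fold: "foldl (decC_step lam x) ([], PInfty, 0, 0) [0..<4] =
      (map (bit_choice ?c) [0..<4], ereal (bit_gap ?c m), m, \<Sum>i<4. bit_min ?c i)"
    using foldl_decC_step[where lam = lam and x = x and n = 3] by (auto simp: numeral_eq_Suc less_Suc_eq_le)
  have "decodeC lam x = (wagner_word ?c m 4, word_cost ?c (wagner_word ?c m 4))"
    unfolding decodeC_def fold wagner_word_cost[OF m(1)] by (simp add: wagner_word_def Let_def)
  then have K: "K = wagner_word ?c m 4" and T: "T = word_cost ?c K"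
    using assms by auto
  show "K \<in> even_weight_words 4" using wagner_word_mem[OF m(1)] K by simp
  show "T = word_cost ?c K" by (fact T)
  show "\<forall>a\<in>even_weight_words 4. T \<le> word_cost ?c a" using K T wagner_word_optimal[OF m] by simp
qed

section \<open>The cosets of C and the extended Hamming code\<close>

(* Entries are not reduced mod 2: torus distances only see their parity. *)
definition e8_word :: "nat \<Rightarrow> nat list \<Rightarrow> nat list" where
  "e8_word s a = map (\<lambda>j. a ! (j div 2) + s * (j mod 2)) [0..<2 * length a]"

definition codeword :: "nat list \<Rightarrow> nat list" where
  "codeword k = map (\<lambda>j. (\<Sum>i<4. k ! i * Hmat ! i ! j) mod 2) [0..<8]"

(* k H mod 2 is the word of C + k_3 c at coset_index k (see codeword_4); the output map of
   Decode_E8 inverts this. *)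
definition coset_index :: "nat list \<Rightarrow> nat list" where
  "coset_index k = [k ! 0, (k ! 0 + k ! 1) mod 2, (k ! 1 + k ! 2) mod 2, k ! 2]"

lemma upt_8: "[0..<8] = [0, 1, 2, 3, 4, 5, 6, 7 :: nat]"
  by (simp add: upt_rec)

lemma e8_word_4:
  "e8_word s [a0, a1, a2, a3] = [a0, a0 + s, a1, a1 + s, a2, a2 + s, a3, a3 + s]"
proof -
  have len: "2 * length [a0, a1, a2, a3] = 8" by simp
  show ?thesis unfolding e8_word_def len upt_8 by simp
qed

lemma codeword_4:
  "codeword [k0, k1, k2, k3] = map (\<lambda>b. b mod 2)
     [k0, k0 + k3, k0 + k1, k0 + k1 + k3, k1 + k2, k1 + k2 + k3, k2, k2 + k3]"
proof -
  have "(\<Sum>i<4. f i) = f 0 + f 1 + f 2 + (f 3 :: nat)" for f :: "nat \<Rightarrow> nat"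
    by (simp add: eval_nat_numeral)
  then show ?thesis unfolding codeword_def upt_8 by (simp add: Hmat_def)
qed

lemma encodeE8_eq_codeword: "encodeE8 lam k = map (\<lambda>b. lam * real b) (codeword k)"
  unfolding encodeE8_def codeword_def by simp

lemma sq_torus_dist_codeword_less:
  assumes "lam > 0" "length v = 8" "normQ2 (2 * lam) (map2 (-) v (encodeE8 lam k)) < lam"
  shows "sq_torus_dist lam v (codeword k) < lam\<^sup>2"
proof -
  have "length (codeword k) = length v" using assms(2) by (simp add: codeword_def)
  then have "sqrt (sq_torus_dist lam v (codeword k)) < sqrt (lam\<^sup>2)"
    using assms(1,3) by (simp add: encodeE8_eq_codeword normQ2_diff_scaled_word)
  then show ?thesis by (simp only: real_sqrt_less_iff)
qed

lemma sum_lessThan_double: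
  fixes f :: "nat \<Rightarrow> 'a::comm_monoid_add"
  shows "(\<Sum>j<2*n. f j) = (\<Sum>i<n. f (2*i) + f (2*i+1))"
  by (induction n) (simp_all add: add.assoc)

lemma word_cost_pair_cost_eq:
  assumes "length v = 2 * length a"
    and "\<forall>j<2 * length a. x ! j = v ! j - lam * real (s * (j mod 2))"
  shows "word_cost (pair_cost lam x) a = sq_torus_dist lam v (e8_word s a)"
proof -
  let ?f = "\<lambda>j. (normQinf (2*lam) (v ! j - lam * real (e8_word s a ! j)))\<^sup>2"
  have "sq_torus_dist lam v (e8_word s a) = (\<Sum>i<length a. ?f (2*i) + ?f (2*i+1))"
    unfolding sq_torus_dist_def assms(1) sum_lessThan_double ..
  also have "\<dots> = (\<Sum>i<length a. pair_cost lam x i (a ! i))"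
  proof (intro sum.cong refl)
    fix i assume "i \<in> {..<length a}"
    then have i: "2*i < 2 * length a" "2*i+1 < 2 * length a" by auto
    then have x: "x ! (2*i) = v ! (2*i)" "x ! (2*i+1) = v ! (2*i+1) - lam * real s"
      using assms(2) by auto
    have e: "e8_word s a ! (2*i) = a ! i" "e8_word s a ! (2*i+1) = a ! i + s"
      using i by (simp_all add: e8_word_def)
    show "?f (2*i) + ?f (2*i+1) = pair_cost lam x i (a ! i)"
      unfolding pair_cost_def normQ2s_def e x by (simp add: algebra_simps)
  qed
  finally show ?thesis unfolding word_cost_def ..
qed

lemma cvec_eq: "cvec = map (\<lambda>j. real (j mod 2)) [0..<8]"
  by (simp add: cvec_def upt_8)

lemma decodeC_coset:
  assumes "length v = 8" "s \<in> {0, 1}"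
    and "decodeC lam (if s = 0 then v else map2 (\<lambda>a c. a - lam * c) v cvec) = (K, T)"
  shows "K \<in> even_weight_words 4" "T = sq_torus_dist lam v (e8_word s K)"
    "\<forall>a\<in>even_weight_words 4. T \<le> sq_torus_dist lam v (e8_word s a)"
proof -
  let ?x = "if s = 0 then v else map2 (\<lambda>a c. a - lam * c) v cvec"
  have x: "\<forall>j<2 * length a. ?x ! j = v ! j - lam * real (s * (j mod 2))" if "length a = 4" for a :: "nat list"
    using assms(1,2) that by (auto simp: cvec_eq)
  have cost: "word_cost (pair_cost lam ?x) a = sq_torus_dist lam v (e8_word s a)"
    if "a \<in> even_weight_words 4" for a
    using that assms(1) by (intro word_cost_pair_cost_eq x) (auto simp: even_weight_words_def)
  show "K \<in> even_weight_words 4" by (rule decodeC_optimal(1)[OF assms(3)])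
  then show "T = sq_torus_dist lam v (e8_word s K)"
    using decodeC_optimal(2)[OF assms(3)] cost by simp
  show "\<forall>a\<in>even_weight_words 4. T \<le> sq_torus_dist lam v (e8_word s a)"
    using decodeC_optimal(3)[OF assms(3)] cost by simp
qed

lemma length_4_cases:
  assumes "length xs = 4"
  obtains x0 x1 x2 x3 where "xs = [x0, x1, x2, x3]"
  using assms by (auto simp: numeral_eq_Suc length_Suc_conv)

lemma binary_4_cases:
  assumes "length k = 4" "set k \<subseteq> {0, 1}"
  obtains k0 k1 k2 k3 where "k = [k0, k1, k2, k3]" "k0 \<in> {0, 1}" "k1 \<in> {0, 1}" "k2 \<in> {0, 1}" "k3 \<in> {0, 1}"
  using assms by (elim length_4_cases) auto

lemma card_filter_upt: "card {j. j < n \<and> P j} = length (filter P [0..<n])"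
proof -
  have "{j. j < n \<and> P j} = set (filter P [0..<n])" by auto
  then show ?thesis by (metis distinct_card distinct_filter distinct_upt)
qed

lemma coset_index_mem:
  assumes "length k = 4" "set k \<subseteq> {0, 1}"
  shows "coset_index k \<in> even_weight_words 4"
proof -
  obtain k0 k1 k2 k3 where k: "k = [k0, k1, k2, k3]" "k0 \<in> {0, 1}" "k1 \<in> {0, 1}" "k2 \<in> {0, 1}" "k3 \<in> {0, 1}"
    using assms by (rule binary_4_cases)
  then show ?thesis unfolding k(1)
    by (elim insertE emptyE) (simp_all add: coset_index_def even_weight_words_def)
qed

lemma coset_index_inverse:
  assumes "length k = 4" "set k \<subseteq> {0, 1}"
  shows "[coset_index k ! 0, (coset_index k ! 1 + coset_index k ! 0) mod 2, coset_index k ! 3, k ! 3] = k"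
proof -
  obtain k0 k1 k2 k3 where k: "k = [k0, k1, k2, k3]" "k0 \<in> {0, 1}" "k1 \<in> {0, 1}" "k2 \<in> {0, 1}" "k3 \<in> {0, 1}"
    using assms by (rule binary_4_cases)
  then show ?thesis unfolding k(1)
    by (elim insertE emptyE) (simp_all add: coset_index_def)
qed

lemma coset_index_parity:
  assumes "length k = 4" "set k \<subseteq> {0, 1}" "j < 8"
  shows "even (codeword k ! j + e8_word (k ! 3) (coset_index k) ! j)"
proof -
  obtain k0 k1 k2 k3 where k: "k = [k0, k1, k2, k3]" "k0 \<in> {0, 1}" "k1 \<in> {0, 1}" "k2 \<in> {0, 1}" "k3 \<in> {0, 1}"
    using assms(1,2) by (rule binary_4_cases)
  have "j \<in> {0, 1, 2, 3, 4, 5, 6, 7}" using assms(3) by auto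
  then show ?thesis using k(2-5) unfolding k(1)
    by (elim insertE emptyE) (simp_all add: e8_word_4 codeword_4 coset_index_def)
qed

lemma codeword_distance:
  assumes "length k = 4" "set k \<subseteq> {0, 1}" "s \<in> {0, 1}" "a \<in> even_weight_words 4"
    and "(s, a) \<noteq> (k ! 3, coset_index k)"
  shows "4 \<le> card {j. j < 8 \<and> odd (e8_word s a ! j + codeword k ! j)}"
proof -
  obtain k0 k1 k2 k3 where k: "k = [k0, k1, k2, k3]" "k0 \<in> {0, 1}" "k1 \<in> {0, 1}" "k2 \<in> {0, 1}" "k3 \<in> {0, 1}"
    using assms(1,2) by (rule binary_4_cases)
  have "length a = 4" "set a \<subseteq> {0, 1}" using assms(4) by (simp_all add: even_weight_words_def)
  then obtain a0 a1 a2 a3 where a: "a = [a0, a1, a2, a3]" "a0 \<in> {0, 1}" "a1 \<in> {0, 1}" "a2 \<in> {0, 1}" "a3 \<in> {0, 1}"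
    by (rule binary_4_cases)
  have "even (sum_list [a0, a1, a2, a3])" using assms(4) unfolding a(1) even_weight_words_def by blast
  then show ?thesis
    using k(2-5) a(2-5) assms(3,5) unfolding k(1) a(1) card_filter_upt upt_8
    by (elim insertE emptyE) (simp_all add: e8_word_4 codeword_4 coset_index_def)
qed

context
  fixes lam :: real and v :: "real list" and k :: "nat list"
  assumes lam: "lam > 0" and v: "length v = 8"
    and k: "length k = 4" "set k \<subseteq> {0, 1}"
    and near: "sq_torus_dist lam v (codeword k) < lam\<^sup>2"
begin

lemma coset_bit: "k ! 3 \<in> {0, 1}"
proof -
  have "k ! 3 \<in> set k" using k(1) by simp
  then show ?thesis using k(2) by blast
qed

lemma sq_torus_dist_coset_index:
  "sq_torus_dist lam v (e8_word (k ! 3) (coset_index k)) = sq_torus_dist lam v (codeword k)"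
  using coset_index_parity[OF k] v by (intro sq_torus_dist_same_parity lam) simp

lemma sq_torus_dist_other_e8_word:
  assumes "s \<in> {0, 1}" "a \<in> even_weight_words 4" "(s, a) \<noteq> (k ! 3, coset_index k)"
  shows "sq_torus_dist lam v (codeword k) < sq_torus_dist lam v (e8_word s a)"
  using codeword_distance[OF k assms] v lam near
  by (intro sq_torus_dist_far_word) (simp_all add: add.commute)

lemma decodeC_own_coset:
  assumes "decodeC lam (if k ! 3 = 0 then v else map2 (\<lambda>a c. a - lam * c) v cvec) = (K, T)"
  shows "K = coset_index k" "T \<le> sq_torus_dist lam v (codeword k)"
proof -
  note dec = decodeC_coset[OF v coset_bit assms]
  show le: "T \<le> sq_torus_dist lam v (codeword k)"
    using dec(3) coset_index_mem[OF k] sq_torus_dist_coset_index by force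
  show "K = coset_index k"
    using sq_torus_dist_other_e8_word[OF coset_bit dec(1)] dec(2) le by fastforce
qed

lemma decodeC_other_coset:
  assumes "s \<in> {0, 1}" "s \<noteq> k ! 3"
    and "decodeC lam (if s = 0 then v else map2 (\<lambda>a c. a - lam * c) v cvec) = (K, T)"
  shows "sq_torus_dist lam v (codeword k) < T"
  using decodeC_coset[OF v assms(1,3)] sq_torus_dist_other_e8_word[OF assms(1)] assms(2) by auto

end

theorem theorem1:
  fixes lam :: real and k1 :: "nat list" and v2 :: "real list"
  assumes "lam > 0"
    and "length k1 = 4" and "set k1 \<subseteq> {0, 1}"
    and "length v2 = 8"
    and "normQ2 (2 * lam) (map2 (-) v2 (encodeE8 lam k1)) < lam"
  shows "decodeE8 lam v2 = k1"
proof -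
  have near: "sq_torus_dist lam v2 (codeword k1) < lam\<^sup>2"
    using sq_torus_dist_codeword_less assms(1,4,5) .
  note own = decodeC_own_coset[OF assms(1,4,2,3) near]
    and other = decodeC_other_coset[OF assms(1,4,2,3) near]
    and result = coset_index_inverse[OF assms(2,3)]
  obtain K0 T0 K1 T1 where
    dec0: "decodeC lam v2 = (K0, T0)" and dec1: "decodeC lam (map2 (\<lambda>a c. a - lam * c) v2 cvec) = (K1, T1)"
    by (metis surj_pair)
  have out: "decodeE8 lam v2 =
      (if T1 < T0 then [K1 ! 0, (K1 ! 1 + K1 ! 0) mod 2, K1 ! 3, 1] else [K0 ! 0, (K0 ! 1 + K0 ! 0) mod 2, K0 ! 3, 0])"
    by (simp add: decodeE8_def dec0 dec1)
  consider (zero) "k1 ! 3 = 0" | (one) "k1 ! 3 = 1"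
    using coset_bit[OF assms(1,4,2,3) near] by auto
  then show ?thesis
  proof cases
    case zero
    then have "K0 = coset_index k1" "T0 < T1"
      using own[of K0 T0] other[of 1 K1 T1] dec0 dec1 by (auto intro: order.strict_trans1)
    then show ?thesis using out result zero by auto
  next
    case one
    then have "K1 = coset_index k1" "T1 < T0"
      using own[of K1 T1] other[of 0 K0 T0] dec0 dec1 by (auto intro: order.strict_trans1)
    then show ?thesis using out result one by auto
  qed
qed

end
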